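(* Let $(\mathcal A,(p_n))$ be a Fréchet algebra, $I$ a closed ideal of $\mathcal A$, and $J$ a closed ideal of $\mathcal A$ with $J\subseteq I$. If $\mathcal A$ is amenable modulo $I$, then the Fréchet algebra $\mathcal A/J$ is amenable modulo $I/J$.
   Context: A Fréchet algebra $(\mathcal A,(p_n))$ is a complete Hausdorff topological algebra whose topology is given by an increasing sequence of submultiplicative seminorms $p_n$; $\mathcal A/J$ carries the quotient seminorms $\hat p_n(a+J)=\inf\{p_n(a+b):b\in J\}$ and $I/J$ is a closed ideal of it. A Fréchet algebra $\mathcal A$ is amenable modulo a closed ideal $I$ if for every Banach $\mathcal A$-bimodule $E$ (with continuous module actions) such that $I\cdot E=E\cdot I=0$, every continuous derivation $D:\mathcal A\to E^*$ is inner on $\mathcal A\setminus I$, i.e. there is $f\in E^*$ with $D(a)=a\cdot f-f\cdot a$ for all $a\in\mathcal A\setminus I$. *)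

theory Defs
  imports "HOL-Analysis.Analysis"
begin

record 'a falg =
  fcar :: "'a set"
  fadd :: "'a \<Rightarrow> 'a \<Rightarrow> 'a"
  fzero :: "'a"
  fmul :: "'a \<Rightarrow> 'a \<Rightarrow> 'a"
  fsmul :: "complex \<Rightarrow> 'a \<Rightarrow> 'a"
  fsn :: "nat \<Rightarrow> 'a \<Rightarrow> real"

definition vs_axioms ::
  "'v set \<Rightarrow> ('v \<Rightarrow> 'v \<Rightarrow> 'v) \<Rightarrow> 'v \<Rightarrow> (complex \<Rightarrow> 'v \<Rightarrow> 'v) \<Rightarrow> bool" where
  "vs_axioms V ad z sm \<longleftrightarrow>
     z \<in> V \<and>
     (\<forall>x\<in>V. \<forall>y\<in>V. ad x y \<in> V) \<and>
     (\<forall>c. \<forall>x\<in>V. sm c x \<in> V) \<and>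
     (\<forall>x\<in>V. \<forall>y\<in>V. \<forall>w\<in>V. ad (ad x y) w = ad x (ad y w)) \<and>
     (\<forall>x\<in>V. \<forall>y\<in>V. ad x y = ad y x) \<and>
     (\<forall>x\<in>V. ad z x = x) \<and>
     (\<forall>x\<in>V. ad x (sm (-1) x) = z) \<and>
     (\<forall>c. \<forall>x\<in>V. \<forall>y\<in>V. sm c (ad x y) = ad (sm c x) (sm c y)) \<and>
     (\<forall>c d. \<forall>x\<in>V. sm (c + d) x = ad (sm c x) (sm d x)) \<and>
     (\<forall>c d. \<forall>x\<in>V. sm (c * d) x = sm c (sm d x)) \<and>
     (\<forall>x\<in>V. sm 1 x = x)"

definition fminus :: "'a falg \<Rightarrow> 'a \<Rightarrow> 'a \<Rightarrow> 'a" where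
  "fminus A x y = fadd A x (fsmul A (-1) y)"

definition fconv :: "'a falg \<Rightarrow> (nat \<Rightarrow> 'a) \<Rightarrow> 'a \<Rightarrow> bool" where
  "fconv A s a \<longleftrightarrow> (\<forall>n. (\<lambda>k. fsn A n (fminus A (s k) a)) \<longlonglongrightarrow> 0)"

definition fcauchy :: "'a falg \<Rightarrow> (nat \<Rightarrow> 'a) \<Rightarrow> bool" where
  "fcauchy A s \<longleftrightarrow> (\<forall>n. \<forall>e>0. \<exists>N. \<forall>k\<ge>N. \<forall>m\<ge>N. fsn A n (fminus A (s k) (s m)) < e)"

definition frechet_algebra :: "'a falg \<Rightarrow> bool" where
  "frechet_algebra A \<longleftrightarrow>
     vs_axioms (fcar A) (fadd A) (fzero A) (fsmul A) \<and>
     (\<forall>x\<in>fcar A. \<forall>y\<in>fcar A. fmul A x y \<in> fcar A) \<and>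
     (\<forall>x\<in>fcar A. \<forall>y\<in>fcar A. \<forall>z\<in>fcar A. fmul A (fmul A x y) z = fmul A x (fmul A y z)) \<and>
     (\<forall>x\<in>fcar A. \<forall>y\<in>fcar A. \<forall>z\<in>fcar A. fmul A x (fadd A y z) = fadd A (fmul A x y) (fmul A x z)) \<and>
     (\<forall>x\<in>fcar A. \<forall>y\<in>fcar A. \<forall>z\<in>fcar A. fmul A (fadd A x y) z = fadd A (fmul A x z) (fmul A y z)) \<and>
     (\<forall>c. \<forall>x\<in>fcar A. \<forall>y\<in>fcar A. fsmul A c (fmul A x y) = fmul A (fsmul A c x) y \<and>
                                      fsmul A c (fmul A x y) = fmul A x (fsmul A c y)) \<and>
     \<comment> \<open>each p_n is a submultiplicative seminorm, and the sequence is increasing\<close>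
     (\<forall>n. \<forall>x\<in>fcar A. \<forall>y\<in>fcar A. fsn A n (fadd A x y) \<le> fsn A n x + fsn A n y) \<and>
     (\<forall>n c. \<forall>x\<in>fcar A. fsn A n (fsmul A c x) = cmod c * fsn A n x) \<and>
     (\<forall>n. \<forall>x\<in>fcar A. \<forall>y\<in>fcar A. fsn A n (fmul A x y) \<le> fsn A n x * fsn A n y) \<and>
     (\<forall>n. \<forall>x\<in>fcar A. fsn A n x \<le> fsn A (Suc n) x) \<and>
     \<comment> \<open>Hausdorff\<close>
     (\<forall>x\<in>fcar A. (\<forall>n. fsn A n x = 0) \<longrightarrow> x = fzero A) \<and>
     \<comment> \<open>complete\<close>
     (\<forall>s. (\<forall>k. s k \<in> fcar A) \<and> fcauchy A s \<longrightarrow> (\<exists>a\<in>fcar A. fconv A s a))"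

text \<open>Closed two-sided ideal (closed = sequentially closed; the topology is metrizable).\<close>
definition closed_ideal :: "'a falg \<Rightarrow> 'a set \<Rightarrow> bool" where
  "closed_ideal A I \<longleftrightarrow>
     I \<subseteq> fcar A \<and> fzero A \<in> I \<and>
     (\<forall>x\<in>I. \<forall>y\<in>I. fadd A x y \<in> I) \<and>
     (\<forall>c. \<forall>x\<in>I. fsmul A c x \<in> I) \<and>
     (\<forall>a\<in>fcar A. \<forall>x\<in>I. fmul A a x \<in> I \<and> fmul A x a \<in> I) \<and>
     (\<forall>s a. (\<forall>k. s k \<in> I) \<and> a \<in> fcar A \<and> fconv A s a \<longrightarrow> a \<in> I)"

definition coset :: "'a falg \<Rightarrow> 'a set \<Rightarrow> 'a \<Rightarrow> 'a set" where
  "coset A J a = {fadd A a b | b. b \<in> J}"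

definition qrep :: "'a set \<Rightarrow> 'a" where
  "qrep X = (SOME x. x \<in> X)"

definition quot :: "'a falg \<Rightarrow> 'a set \<Rightarrow> 'a set falg" where
  "quot A J = \<lparr> fcar = coset A J ` fcar A,
                fadd = (\<lambda>X Y. coset A J (fadd A (qrep X) (qrep Y))),
                fzero = coset A J (fzero A),
                fmul = (\<lambda>X Y. coset A J (fmul A (qrep X) (qrep Y))),
                fsmul = (\<lambda>c X. coset A J (fsmul A c (qrep X))),
                fsn = (\<lambda>n X. Inf ((\<lambda>x. fsn A n x) ` X)) \<rparr>"

definition qideal :: "'a falg \<Rightarrow> 'a set \<Rightarrow> 'a set \<Rightarrow> 'a set set" where
  "qideal A J I = coset A J ` I"

record 'e bsp =
  bcar :: "'e set"
  badd :: "'e \<Rightarrow> 'e \<Rightarrow> 'e"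
  bzero :: "'e"
  bsmul :: "complex \<Rightarrow> 'e \<Rightarrow> 'e"
  bnorm :: "'e \<Rightarrow> real"

definition bminus :: "'e bsp \<Rightarrow> 'e \<Rightarrow> 'e \<Rightarrow> 'e" where
  "bminus E x y = badd E x (bsmul E (-1) y)"

definition banach_space :: "'e bsp \<Rightarrow> bool" where
  "banach_space E \<longleftrightarrow>
     vs_axioms (bcar E) (badd E) (bzero E) (bsmul E) \<and>
     (\<forall>x\<in>bcar E. \<forall>y\<in>bcar E. bnorm E (badd E x y) \<le> bnorm E x + bnorm E y) \<and>
     (\<forall>c. \<forall>x\<in>bcar E. bnorm E (bsmul E c x) = cmod c * bnorm E x) \<and>
     (\<forall>x\<in>bcar E. bnorm E x = 0 \<longrightarrow> x = bzero E) \<and>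
     (\<forall>s. (\<forall>k. s k \<in> bcar E) \<and>
          (\<forall>e>0. \<exists>N. \<forall>k\<ge>N. \<forall>m\<ge>N. bnorm E (bminus E (s k) (s m)) < e)
          \<longrightarrow> (\<exists>x\<in>bcar E. (\<lambda>k. bnorm E (bminus E (s k) x)) \<longlonglongrightarrow> 0))"

definition bimodule ::
  "'a falg \<Rightarrow> 'e bsp \<Rightarrow> ('a \<Rightarrow> 'e \<Rightarrow> 'e) \<Rightarrow> ('e \<Rightarrow> 'a \<Rightarrow> 'e) \<Rightarrow> bool" where
  "bimodule A E la ra \<longleftrightarrow>
     (\<forall>a\<in>fcar A. \<forall>x\<in>bcar E. la a x \<in> bcar E \<and> ra x a \<in> bcar E) \<and>
     (\<forall>a\<in>fcar A. \<forall>b\<in>fcar A. \<forall>x\<in>bcar E. la (fadd A a b) x = badd E (la a x) (la b x)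
                                      \<and> ra x (fadd A a b) = badd E (ra x a) (ra x b)) \<and>
     (\<forall>a\<in>fcar A. \<forall>x\<in>bcar E. \<forall>y\<in>bcar E. la a (badd E x y) = badd E (la a x) (la a y)
                                      \<and> ra (badd E x y) a = badd E (ra x a) (ra y a)) \<and>
     (\<forall>c. \<forall>a\<in>fcar A. \<forall>x\<in>bcar E.
          la (fsmul A c a) x = bsmul E c (la a x) \<and> la a (bsmul E c x) = bsmul E c (la a x) \<and>
          ra x (fsmul A c a) = bsmul E c (ra x a) \<and> ra (bsmul E c x) a = bsmul E c (ra x a)) \<and>
     (\<forall>a\<in>fcar A. \<forall>b\<in>fcar A. \<forall>x\<in>bcar E.
          la (fmul A a b) x = la a (la b x) \<and>
          ra x (fmul A a b) = ra (ra x a) b \<and>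
          ra (la a x) b = la a (ra x b)) \<and>
     (\<forall>s a t x. (\<forall>k. s k \<in> fcar A \<and> t k \<in> bcar E) \<and> a \<in> fcar A \<and> x \<in> bcar E \<and>
          fconv A s a \<and> (\<lambda>k. bnorm E (bminus E (t k) x)) \<longlonglongrightarrow> 0 \<longrightarrow>
          (\<lambda>k. bnorm E (bminus E (la (s k) (t k)) (la a x))) \<longlonglongrightarrow> 0 \<and>
          (\<lambda>k. bnorm E (bminus E (ra (t k) (s k)) (ra x a))) \<longlonglongrightarrow> 0)"

text \<open>Elements of the dual E* are represented by functions on the carrier of E.\<close>
definition in_dual :: "'e bsp \<Rightarrow> ('e \<Rightarrow> complex) \<Rightarrow> bool" where
  "in_dual E f \<longleftrightarrow>
     (\<forall>x\<in>bcar E. \<forall>y\<in>bcar E. f (badd E x y) = f x + f y) \<and>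
     (\<forall>c. \<forall>x\<in>bcar E. f (bsmul E c x) = c * f x) \<and>
     (\<exists>C. \<forall>x\<in>bcar E. cmod (f x) \<le> C * bnorm E x)"

definition dnorm :: "'e bsp \<Rightarrow> ('e \<Rightarrow> complex) \<Rightarrow> real" where
  "dnorm E f = Sup ((\<lambda>x. cmod (f x)) ` {x \<in> bcar E. bnorm E x \<le> 1})"

text \<open>Continuous derivation D : A \<rightarrow> E*, with the dual actions
  (a.f)(x) = f(x.a) and (f.a)(x) = f(a.x).\<close>
definition cont_derivation ::
  "'a falg \<Rightarrow> 'e bsp \<Rightarrow> ('a \<Rightarrow> 'e \<Rightarrow> 'e) \<Rightarrow> ('e \<Rightarrow> 'a \<Rightarrow> 'e) \<Rightarrow> ('a \<Rightarrow> 'e \<Rightarrow> complex) \<Rightarrow> bool" where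
  "cont_derivation A E la ra D \<longleftrightarrow>
     (\<forall>a\<in>fcar A. in_dual E (D a)) \<and>
     (\<forall>a\<in>fcar A. \<forall>b\<in>fcar A. \<forall>x\<in>bcar E. D (fadd A a b) x = D a x + D b x) \<and>
     (\<forall>c. \<forall>a\<in>fcar A. \<forall>x\<in>bcar E. D (fsmul A c a) x = c * D a x) \<and>
     (\<forall>a\<in>fcar A. \<forall>b\<in>fcar A. \<forall>x\<in>bcar E. D (fmul A a b) x = D b (ra x a) + D a (la b x)) \<and>
     (\<forall>s a. (\<forall>k. s k \<in> fcar A) \<and> a \<in> fcar A \<and> fconv A s a \<longrightarrow>
          (\<lambda>k. dnorm E (\<lambda>x. D (s k) x - D a x)) \<longlonglongrightarrow> 0)"

text \<open>Amenability modulo a closed ideal I, quantifying over Banach bimodules whose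
  underlying elements have type 'e.\<close>
definition amenable_mod :: "'a falg \<Rightarrow> 'a set \<Rightarrow> 'e itself \<Rightarrow> bool" where
  "amenable_mod A I (_ :: 'e itself) \<longleftrightarrow>
     (\<forall>(E :: 'e bsp) la ra D.
        banach_space E \<and> bimodule A E la ra \<and>
        (\<forall>a\<in>I. \<forall>x\<in>bcar E. la a x = bzero E \<and> ra x a = bzero E) \<and>
        cont_derivation A E la ra D \<longrightarrow>
        (\<exists>f. in_dual E f \<and>
             (\<forall>a\<in>fcar A - I. \<forall>x\<in>bcar E. D a x = f (ra x a) - f (la a x))))"

end

theory Submission
  imports Defs
begin

text \<open>The quotient map q : A \<rightarrow> A/J is a continuous surjective homomorphism carrying I onto
  I/J. Composing with q turns a Banach A/J-bimodule E annihilated by I/J into a Banach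
  A-bimodule annihilated by I, and a continuous derivation D : A/J \<rightarrow> E* into the continuous
  derivation D \<circ> q. Amenability of A modulo I makes D \<circ> q inner on A \<setminus> I; since every class
  outside I/J has all its representatives outside I, the same functional makes D inner on
  (A/J) \<setminus> (I/J).\<close>

definition cont_falg_hom :: "'a falg \<Rightarrow> 'b falg \<Rightarrow> ('a \<Rightarrow> 'b) \<Rightarrow> bool" where
  "cont_falg_hom A B q \<longleftrightarrow>
     (\<forall>a\<in>fcar A. q a \<in> fcar B) \<and>
     (\<forall>a\<in>fcar A. \<forall>b\<in>fcar A. q (fadd A a b) = fadd B (q a) (q b)) \<and>
     (\<forall>c. \<forall>a\<in>fcar A. q (fsmul A c a) = fsmul B c (q a)) \<and>
     (\<forall>a\<in>fcar A. \<forall>b\<in>fcar A. q (fmul A a b) = fmul B (q a) (q b)) \<and>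
     (\<forall>s a. (\<forall>k. s k \<in> fcar A) \<and> a \<in> fcar A \<and> fconv A s a \<longrightarrow> fconv B (\<lambda>k. q (s k)) (q a))"

lemma cont_falg_homD:
  assumes "cont_falg_hom A B q"
  shows "a \<in> fcar A \<Longrightarrow> q a \<in> fcar B"
    and "a \<in> fcar A \<Longrightarrow> b \<in> fcar A \<Longrightarrow> q (fadd A a b) = fadd B (q a) (q b)"
    and "a \<in> fcar A \<Longrightarrow> q (fsmul A c a) = fsmul B c (q a)"
    and "a \<in> fcar A \<Longrightarrow> b \<in> fcar A \<Longrightarrow> q (fmul A a b) = fmul B (q a) (q b)"
    and "(\<And>k. s k \<in> fcar A) \<Longrightarrow> a \<in> fcar A \<Longrightarrow> fconv A s a \<Longrightarrow> fconv B (\<lambda>k. q (s k)) (q a)"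
  using assms unfolding cont_falg_hom_def by blast+

lemma bimodule_pullback:
  assumes q: "cont_falg_hom A B q" and E: "bimodule B E la ra"
  shows "bimodule A E (\<lambda>a. la (q a)) (\<lambda>x a. ra x (q a))"
  using E unfolding bimodule_def
  by (simp add: cont_falg_homD[OF q])

lemma cont_derivation_pullback:
  assumes q: "cont_falg_hom A B q" and D: "cont_derivation B E la ra D"
  shows "cont_derivation A E (\<lambda>a. la (q a)) (\<lambda>x a. ra x (q a)) (\<lambda>a. D (q a))"
  using D unfolding cont_derivation_def
  by (simp add: cont_falg_homD[OF q])

lemma amenable_mod_image:
  assumes amen: "amenable_mod A I TYPE('e)"
    and q: "cont_falg_hom A B q" and onto: "fcar B = q ` fcar A" and maps_ideal: "q ` I \<subseteq> I'"
  shows "amenable_mod B I' TYPE('e)"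
  unfolding amenable_mod_def
proof (intro allI impI, elim conjE)
  fix E :: "'e bsp" and la ra D
  assume E: "banach_space E" and bim: "bimodule B E la ra"
    and van: "\<forall>a\<in>I'. \<forall>x\<in>bcar E. la a x = bzero E \<and> ra x a = bzero E"
    and der: "cont_derivation B E la ra D"
  have "\<forall>a\<in>I. \<forall>x\<in>bcar E. la (q a) x = bzero E \<and> ra x (q a) = bzero E"
    using van maps_ideal by blast
  then obtain f where f: "in_dual E f"
    and inner: "\<forall>a\<in>fcar A - I. \<forall>x\<in>bcar E. D (q a) x = f (ra x (q a)) - f (la (q a) x)"
    using amen E bimodule_pullback[OF q bim] cont_derivation_pullback[OF q der]
    unfolding amenable_mod_def by blast
  show "\<exists>f. in_dual E f \<and> (\<forall>b\<in>fcar B - I'. \<forall>x\<in>bcar E. D b x = f (ra x b) - f (la b x))"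
  proof (intro exI conjI ballI)
    fix b x assume b: "b \<in> fcar B - I'" and x: "x \<in> bcar E"
    \<comment> \<open>b lifts to an element outside I, since q maps I into I'\<close>
    then obtain a where "a \<in> fcar A - I" "b = q a"
      using onto maps_ideal by blast
    with inner x show "D b x = f (ra x b) - f (la b x)" by blast
  qed (rule f)
qed

locale frechet_alg =
  fixes A :: "'a falg"
  assumes frechet: "frechet_algebra A"
begin

lemma vector_space: "vs_axioms (fcar A) (fadd A) (fzero A) (fsmul A)"
  using frechet by (simp add: frechet_algebra_def)

lemma carrier_closed:
  shows "fzero A \<in> fcar A"
    and "x \<in> fcar A \<Longrightarrow> y \<in> fcar A \<Longrightarrow> fadd A x y \<in> fcar A"
    and "x \<in> fcar A \<Longrightarrow> fsmul A c x \<in> fcar A"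
    and "x \<in> fcar A \<Longrightarrow> y \<in> fcar A \<Longrightarrow> fmul A x y \<in> fcar A"
  using vector_space frechet unfolding vs_axioms_def frechet_algebra_def by simp_all

lemma add_assoc:
  "x \<in> fcar A \<Longrightarrow> y \<in> fcar A \<Longrightarrow> z \<in> fcar A \<Longrightarrow> fadd A (fadd A x y) z = fadd A x (fadd A y z)"
  using vector_space unfolding vs_axioms_def by (elim conjE) blast

lemma add_commute: "x \<in> fcar A \<Longrightarrow> y \<in> fcar A \<Longrightarrow> fadd A x y = fadd A y x"
  using vector_space unfolding vs_axioms_def by (elim conjE) blast

lemma add_left_commute:
  "x \<in> fcar A \<Longrightarrow> y \<in> fcar A \<Longrightarrow> z \<in> fcar A \<Longrightarrow> fadd A x (fadd A y z) = fadd A y (fadd A x z)"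
  by (metis add_assoc add_commute)

lemma add_zero_left: "x \<in> fcar A \<Longrightarrow> fadd A (fzero A) x = x"
  using vector_space unfolding vs_axioms_def by (elim conjE) blast

lemma add_zero_right: "x \<in> fcar A \<Longrightarrow> fadd A x (fzero A) = x"
  by (metis add_commute add_zero_left carrier_closed(1))

lemma add_neg: "x \<in> fcar A \<Longrightarrow> fadd A x (fsmul A (-1) x) = fzero A"
  using vector_space unfolding vs_axioms_def by (elim conjE) blast

lemma smul_add_distrib:
  "x \<in> fcar A \<Longrightarrow> y \<in> fcar A \<Longrightarrow> fsmul A c (fadd A x y) = fadd A (fsmul A c x) (fsmul A c y)"
  using vector_space unfolding vs_axioms_def by (elim conjE) blast

lemma add_smul_distrib: "x \<in> fcar A \<Longrightarrow> fsmul A (c + d) x = fadd A (fsmul A c x) (fsmul A d x)"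
  using vector_space unfolding vs_axioms_def by (elim conjE) blast

lemma smul_one: "x \<in> fcar A \<Longrightarrow> fsmul A 1 x = x"
  using vector_space unfolding vs_axioms_def by simp

lemma mul_add_distrib:
  assumes "x \<in> fcar A" "y \<in> fcar A" "z \<in> fcar A"
  shows "fmul A x (fadd A y z) = fadd A (fmul A x y) (fmul A x z)"
    and "fmul A (fadd A x y) z = fadd A (fmul A x z) (fmul A y z)"
  using frechet assms unfolding frechet_algebra_def by simp_all

lemma seminorm_triangle: "x \<in> fcar A \<Longrightarrow> y \<in> fcar A \<Longrightarrow> fsn A n (fadd A x y) \<le> fsn A n x + fsn A n y"
  using frechet unfolding frechet_algebra_def by simp

lemma seminorm_smul: "x \<in> fcar A \<Longrightarrow> fsn A n (fsmul A c x) = cmod c * fsn A n x"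
  using frechet unfolding frechet_algebra_def by simp

lemma seminorm_zero: "fsn A n (fzero A) = 0"
proof -
  have "fsmul A 2 (fzero A) = fzero A"
    using add_smul_distrib[of "fzero A" 1 1] carrier_closed(1)
    by (simp add: smul_one add_zero_left)
  then have "fsn A n (fzero A) = 2 * fsn A n (fzero A)"
    using seminorm_smul[OF carrier_closed(1), of n 2] by simp
  then show ?thesis by simp
qed

lemma seminorm_nonneg:
  assumes x: "x \<in> fcar A" shows "0 \<le> fsn A n x"
proof -
  have "fsn A n (fzero A) \<le> fsn A n x + fsn A n (fsmul A (-1) x)"
    using seminorm_triangle[OF x carrier_closed(3)[OF x, of "-1"]] add_neg[OF x] by simp
  then show ?thesis
    using seminorm_zero seminorm_smul[OF x, of n "-1"] by simp
qed

end

locale frechet_algebra_ideal = frechet_alg A for A :: "'a falg" +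
  fixes J :: "'a set"
  assumes ideal: "closed_ideal A J"
begin

lemma ideal_closed:
  shows "J \<subseteq> fcar A" and "fzero A \<in> J"
    and "x \<in> J \<Longrightarrow> y \<in> J \<Longrightarrow> fadd A x y \<in> J"
    and "x \<in> J \<Longrightarrow> fsmul A c x \<in> J"
    and "a \<in> fcar A \<Longrightarrow> x \<in> J \<Longrightarrow> fmul A a x \<in> J"
    and "a \<in> fcar A \<Longrightarrow> x \<in> J \<Longrightarrow> fmul A x a \<in> J"
  using ideal unfolding closed_ideal_def by simp_all

lemma coset_add_ideal:
  assumes a: "a \<in> fcar A" and j: "j \<in> J"
  shows "coset A J (fadd A a j) = coset A J a"
proof (rule set_eqI, rule iffI)
  fix x
  assume "x \<in> coset A J (fadd A a j)"
  then obtain k where k: "k \<in> J" and x: "x = fadd A (fadd A a j) k"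
    unfolding coset_def by blast
  then have "x = fadd A a (fadd A j k)"
    using add_assoc a j ideal_closed(1) by blast
  with j k show "x \<in> coset A J a"
    unfolding coset_def using ideal_closed(3) by blast
next
  have jA: "j \<in> fcar A" using j ideal_closed(1) by blast
  define j' where "j' = fsmul A (-1) j"
  have j': "j' \<in> J" "j' \<in> fcar A"
    unfolding j'_def using j ideal_closed(1,4) by blast+
  fix x
  assume "x \<in> coset A J a"
  then obtain k where k: "k \<in> J" "k \<in> fcar A" and x: "x = fadd A a k"
    unfolding coset_def using ideal_closed(1) by blast
  have "fadd A (fadd A a j) (fadd A k j') = fadd A a (fadd A k (fadd A j j'))"
    using add_assoc add_left_commute carrier_closed(2) a jA k(2) j'(2) by metis
  also have "\<dots> = x"
    unfolding j'_def using add_neg[OF jA] add_zero_right k(2) x by simp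
  finally show "x \<in> coset A J (fadd A a j)"
    unfolding coset_def using ideal_closed(3)[OF k(1) j'(1)] by blast
qed

lemma qrep_coset:
  assumes "a \<in> fcar A"
  obtains j where "j \<in> J" "qrep (coset A J a) = fadd A a j"
proof -
  have "coset A J a \<noteq> {}"
    unfolding coset_def using ideal_closed(2) by blast
  then have "qrep (coset A J a) \<in> coset A J a"
    unfolding qrep_def by (simp add: some_in_eq)
  then show ?thesis
    using that unfolding coset_def by blast
qed

lemma quot_fadd_coset:
  assumes a: "a \<in> fcar A" and b: "b \<in> fcar A"
  shows "fadd (quot A J) (coset A J a) (coset A J b) = coset A J (fadd A a b)"
proof -
  obtain j where j: "j \<in> J" "qrep (coset A J a) = fadd A a j" using qrep_coset[OF a] .
  obtain k where k: "k \<in> J" "qrep (coset A J b) = fadd A b k" using qrep_coset[OF b] .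
  have "fadd A (fadd A a j) (fadd A b k) = fadd A (fadd A a b) (fadd A j k)"
    using j(1) k(1) ideal_closed(1) a b add_assoc add_left_commute carrier_closed(2)
    by (metis subsetD)
  then show ?thesis
    unfolding quot_def
    using j k coset_add_ideal[OF carrier_closed(2)[OF a b] ideal_closed(3)[OF j(1) k(1)]]
    by simp
qed

lemma quot_fsmul_coset:
  assumes a: "a \<in> fcar A"
  shows "fsmul (quot A J) c (coset A J a) = coset A J (fsmul A c a)"
proof -
  obtain j where j: "j \<in> J" "qrep (coset A J a) = fadd A a j" using qrep_coset[OF a] .
  have "fsmul A c (fadd A a j) = fadd A (fsmul A c a) (fsmul A c j)"
    using smul_add_distrib a j ideal_closed(1) by blast
  then show ?thesis
    unfolding quot_def
    using j coset_add_ideal[OF carrier_closed(3)[OF a] ideal_closed(4)[OF j(1)]]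
    by simp
qed

lemma quot_fmul_coset:
  assumes a: "a \<in> fcar A" and b: "b \<in> fcar A"
  shows "fmul (quot A J) (coset A J a) (coset A J b) = coset A J (fmul A a b)"
proof -
  obtain j where j: "j \<in> J" "qrep (coset A J a) = fadd A a j" using qrep_coset[OF a] .
  obtain k where k: "k \<in> J" "qrep (coset A J b) = fadd A b k" using qrep_coset[OF b] .
  have jA: "j \<in> fcar A" and kA: "k \<in> fcar A" and bk: "fadd A b k \<in> fcar A"
    using j k b ideal_closed(1) carrier_closed(2) by blast+
  have "fmul A (fadd A a j) (fadd A b k)
        = fadd A (fadd A (fmul A a b) (fmul A a k)) (fmul A j (fadd A b k))"
    using mul_add_distrib[OF a jA bk] mul_add_distrib[OF a b kA] by simp
  also have "\<dots> = fadd A (fmul A a b) (fadd A (fmul A a k) (fmul A j (fadd A b k)))"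
    using add_assoc carrier_closed(4) a b jA kA bk by simp
  finally have "fmul A (fadd A a j) (fadd A b k)
        = fadd A (fmul A a b) (fadd A (fmul A a k) (fmul A j (fadd A b k)))" .
  moreover have "fadd A (fmul A a k) (fmul A j (fadd A b k)) \<in> J"
    using ideal_closed(3,5,6) a bk j(1) k(1) by blast
  ultimately show ?thesis
    unfolding quot_def using j k coset_add_ideal[OF carrier_closed(4)[OF a b]] by simp
qed

lemma quot_fminus_coset:
  "a \<in> fcar A \<Longrightarrow> b \<in> fcar A \<Longrightarrow>
   fminus (quot A J) (coset A J a) (coset A J b) = coset A J (fminus A a b)"
  unfolding fminus_def by (simp add: quot_fsmul_coset quot_fadd_coset carrier_closed(3))

lemma quot_seminorm_coset:
  assumes x: "x \<in> fcar A"
  shows "0 \<le> fsn (quot A J) n (coset A J x)" and "fsn (quot A J) n (coset A J x) \<le> fsn A n x"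
proof -
  let ?S = "fsn A n ` coset A J x"
  have "coset A J x \<subseteq> fcar A"
    unfolding coset_def using x ideal_closed(1) carrier_closed(2) by blast
  then have nonneg: "\<And>y. y \<in> ?S \<Longrightarrow> 0 \<le> y"
    using seminorm_nonneg by blast
  have "x \<in> coset A J x"
    unfolding coset_def using add_zero_right[OF x] ideal_closed(2) by force
  then have x_in: "fsn A n x \<in> ?S" by blast
  have "fsn (quot A J) n (coset A J x) = Inf ?S"
    by (simp add: quot_def)
  moreover have "Inf ?S \<le> fsn A n x"
    using x_in nonneg by (meson bdd_belowI cInf_lower)
  moreover have "0 \<le> Inf ?S"
    using x_in nonneg by (metis cInf_greatest empty_iff)
  ultimately show "0 \<le> fsn (quot A J) n (coset A J x)"
    and "fsn (quot A J) n (coset A J x) \<le> fsn A n x" by simp_all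
qed

lemma fconv_quot:
  assumes s: "\<And>k. s k \<in> fcar A" and a: "a \<in> fcar A" and conv: "fconv A s a"
  shows "fconv (quot A J) (\<lambda>k. coset A J (s k)) (coset A J a)"
  unfolding fconv_def
proof
  fix n
  have diff: "fminus A (s k) a \<in> fcar A" for k
    unfolding fminus_def using s a carrier_closed(2,3) by blast
  have lim: "(\<lambda>k. fsn A n (fminus A (s k) a)) \<longlonglongrightarrow> 0"
    using conv unfolding fconv_def by blast
  have bound: "norm (fsn (quot A J) n (fminus (quot A J) (coset A J (s k)) (coset A J a)))
      \<le> fsn A n (fminus A (s k) a)" for k
    using quot_seminorm_coset[OF diff] quot_fminus_coset[OF s a] by simp
  show "(\<lambda>k. fsn (quot A J) n (fminus (quot A J) (coset A J (s k)) (coset A J a))) \<longlonglongrightarrow> 0"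
    by (rule Lim_null_comparison[OF always_eventually lim]) (intro allI bound)
qed

lemma cont_falg_hom_coset: "cont_falg_hom A (quot A J) (coset A J)"
  unfolding cont_falg_hom_def
  by (simp add: quot_fadd_coset quot_fsmul_coset quot_fmul_coset fconv_quot)
    (simp add: quot_def)

end

theorem proposition2p11:
  fixes A :: "'a falg" and I J :: "'a set"
  assumes "frechet_algebra A"
    and "closed_ideal A I"
    and "closed_ideal A J"
    and "J \<subseteq> I"
    and "amenable_mod A I TYPE('e)"
  shows "amenable_mod (quot A J) (qideal A J I) TYPE('e)"
proof -
  interpret frechet_algebra_ideal A J
    using assms(1,3) by unfold_locales
  show ?thesis
    using amenable_mod_image[OF assms(5) cont_falg_hom_coset]
    by (simp add: quot_def qideal_def)
qed

end
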